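(* Fix a constant $\alpha\ge 1$. Let $T$ be the uncompressed octree over $[0,U]^3$, with $U$ a power of $2$. For each node $u$ of $T$, let $P(u)$ be defined as in the context. Then every $\alpha$-fat axis-parallel box $R$ with integer corner coordinates in $[0,U]$ satisfies $R\in P(u)$ for at most $O(1)$ nodes $u$ of $T$, where the constant depends only on $\alpha$.
   Context: The uncompressed octree $T$ over $[0,U]^3$ is the complete tree in which the root has cell $\mathrm{cell}(\text{root})=[0,U]^3$. Every node whose cell has side length greater than $1$ has eight children, whose cells are the eight equal octants of its cell. For a node $u$, the set $P(u)$ consists of all boxes $R$ such that (i) $R$ contains at least one corner (vertex) of $\mathrm{cell}(u)$, and (ii) $R$ contains no corner of $\mathrm{cell}(w)$ for any proper ancestor $w$ of $u$. Boxes are closed. An axis-parallel box is $\alpha$-fat if the ratio of its longest edge length to its shortest edge length is at most $\alpha$. *)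

theory Defs
  imports "HOL-Analysis.Analysis"
begin

text \<open>Octree over [0,U]^3 with U = 2^m. A node is a pair (k, j): level k (0 = root,
  k \<le> m) and integer position j with 0 \<le> j_i < 2^k. Its cell has side 2^(m-k)
  and lower corner 2^(m-k) * j.\<close>

type_synonym onode = "nat \<times> (nat ^ 3)"

definition octree_node :: "nat \<Rightarrow> onode \<Rightarrow> bool" where
  "octree_node m u \<longleftrightarrow> fst u \<le> m \<and> (\<forall>i. snd u $ i < 2 ^ fst u)"

definition cell_lo :: "nat \<Rightarrow> onode \<Rightarrow> real ^ 3" where
  "cell_lo m u = (\<chi> i. real (2 ^ (m - fst u) * (snd u $ i)))"

definition cell_hi :: "nat \<Rightarrow> onode \<Rightarrow> real ^ 3" where
  "cell_hi m u = (\<chi> i. real (2 ^ (m - fst u) * (snd u $ i + 1)))"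

definition cell :: "nat \<Rightarrow> onode \<Rightarrow> (real ^ 3) set" where
  "cell m u = cbox (cell_lo m u) (cell_hi m u)"

definition cell_corners :: "nat \<Rightarrow> onode \<Rightarrow> (real ^ 3) set" where
  "cell_corners m u = {x. \<forall>i. x $ i = cell_lo m u $ i \<or> x $ i = cell_hi m u $ i}"

text \<open>w is a proper ancestor of u: a node at a strictly smaller level whose cell
  contains the cell of u (cells of one level tile the cube, so this is the tree ancestor).\<close>
definition proper_ancestor :: "nat \<Rightarrow> onode \<Rightarrow> onode \<Rightarrow> bool" where
  "proper_ancestor m w u \<longleftrightarrow> octree_node m w \<and> fst w < fst u \<and> cell m u \<subseteq> cell m w"

definition P :: "nat \<Rightarrow> onode \<Rightarrow> (real ^ 3) set set" where
  "P m u = {R. (\<exists>c\<in>cell_corners m u. c \<in> R) \<and>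
              (\<forall>w. proper_ancestor m w u \<longrightarrow> (\<forall>c\<in>cell_corners m w. c \<notin> R))}"

definition fat :: "real \<Rightarrow> real ^ 3 \<Rightarrow> real ^ 3 \<Rightarrow> bool" where
  "fat \<alpha> lo hi \<longleftrightarrow> (\<forall>i j. hi $ i - lo $ i \<le> \<alpha> * (hi $ j - lo $ j))"

end

theory Submission
  imports Defs
begin

(*
  If R \<in> P(u) with u at level k \<ge> 1, then R contains a corner of u and meets the parent cell
  but contains none of its corners, so R is shorter than 2 * 2^(m-k) in some direction.
  If moreover R \<in> P(u') for some u' strictly above u, pick a corner of u in R: it is not a
  corner of the parent, so one of its coordinates is an odd multiple of 2^(m-k), while every
  corner of u' has even multiples there; hence R is at least 2^(m-k) long in that direction.
  By fatness all levels except the shallowest lie within log2(2\<alpha>) of each other, and on a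
  single level R, whose sides are all below 2\<alpha> cell sides, meets the corners of only
  O(\<alpha>^3) cells.
*)

lemma bij_betw_vec_nth_componentwise:
  fixes B :: "'n::finite \<Rightarrow> 'a set"
  shows "bij_betw vec_nth {V :: 'a^'n. \<forall>i. V $ i \<in> B i} (PiE UNIV B)"
  by (intro bij_betwI[of _ _ _ vec_lambda]) (auto simp: vec_eq_iff)

lemma card_vec_componentwise:
  fixes B :: "'n::finite \<Rightarrow> 'a set"
  shows "card {V :: 'a^'n. \<forall>i. V $ i \<in> B i} = (\<Prod>i\<in>UNIV. card (B i))"
  using bij_betw_vec_nth_componentwise[of B] by (simp add: bij_betw_same_card card_PiE)

lemma finite_vec_componentwise:
  fixes B :: "'n::finite \<Rightarrow> 'a set"
  assumes "\<And>i. finite (B i)"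
  shows "finite {V :: 'a^'n. \<forall>i. V $ i \<in> B i}"
  using bij_betw_finite[OF bij_betw_vec_nth_componentwise[of B]] assms by (simp add: finite_PiE)

lemma nat_in_window:
  assumes "x \<le> real j" "real j < x + real N"
  shows "j \<in> {nat \<lceil>x\<rceil>..<nat \<lceil>x\<rceil> + N}"
proof -
  have "\<lceil>x\<rceil> \<le> int j" using assms(1) by (simp add: ceiling_le_iff)
  moreover have "real j < real_of_int \<lceil>x\<rceil> + real N"
    using assms(2) le_of_int_ceiling[of x] by linarith
  ultimately show ?thesis by (auto simp: nat_le_iff)
qed

lemma odd_multiple_dist_even_multiple:
  fixes \<sigma> :: real
  assumes "0 \<le> \<sigma>" "odd t"
  shows "\<sigma> \<le> \<bar>\<sigma> * real (2 * p) - \<sigma> * real t\<bar>"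
proof -
  have "2 * p + 1 \<le> t \<or> t + 1 \<le> 2 * p" using assms(2) by presburger
  then have "1 \<le> \<bar>real (2 * p) - real t\<bar>"
    using of_nat_le_iff[of "2 * p + 1" t, where 'a=real] of_nat_le_iff[of "t + 1" "2 * p", where 'a=real]
    by auto
  then have "\<sigma> * 1 \<le> \<sigma> * \<bar>real (2 * p) - real t\<bar>" by (rule mult_left_mono[OF _ assms(1)])
  then show ?thesis by (simp add: abs_mult assms flip: right_diff_distrib)
qed

lemma cbox_contains_corner:
  fixes a b lo hi :: "real^'n"
  assumes "c \<in> cbox lo hi" "c \<in> cbox a b" "\<And>i. b $ i - a $ i \<le> hi $ i - lo $ i"
  shows "\<exists>x. (\<forall>i. x $ i = a $ i \<or> x $ i = b $ i) \<and> x \<in> cbox lo hi"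
proof (intro exI conjI)
  let ?x = "\<chi> i. if lo $ i \<le> a $ i then a $ i else b $ i"
  show "\<forall>i. ?x $ i = a $ i \<or> ?x $ i = b $ i" by simp
  show "?x \<in> cbox lo hi"
    unfolding mem_box_cart
  proof
    fix i
    have "lo $ i \<le> c $ i" "c $ i \<le> hi $ i" "a $ i \<le> c $ i" "c $ i \<le> b $ i"
      using assms(1,2) by (auto simp: mem_box_cart)
    then show "lo $ i \<le> ?x $ i \<and> ?x $ i \<le> hi $ i"
      using assms(3)[of i] by auto
  qed
qed

lemma card_le_if_clustered_above_Min:
  fixes K :: "nat set"
  assumes "finite K"
    and clustered: "\<And>a b c. a \<in> K \<Longrightarrow> b \<in> K \<Longrightarrow> c \<in> K \<Longrightarrow> a < b \<Longrightarrow> b \<le> c \<Longrightarrow> c < b + L"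
  shows "card K \<le> L + 1"
proof (cases "K - {Min K} = {}")
  case True
  then have "K \<subseteq> {Min K}" by blast
  then show ?thesis using card_mono[of "{Min K}" K] by simp
next
  case False
  define a where "a = Min K"
  define b where "b = Min (K - {a})"
  have a: "a \<in> K" unfolding a_def using False \<open>finite K\<close> by (intro Min_in) auto
  have b: "b \<in> K - {a}"
    unfolding b_def using False \<open>finite K\<close> by (intro Min_in) (auto simp: a_def)
  then have "a < b" using Min_le[OF \<open>finite K\<close>, of b] by (auto simp: a_def)
  have "K \<subseteq> insert a {b..<b + L}"
  proof
    fix c assume c: "c \<in> K"
    show "c \<in> insert a {b..<b + L}"
    proof (cases "c = a")
      case False
      then have "b \<le> c" using c \<open>finite K\<close> by (simp add: b_def)
      then show ?thesis using clustered[OF a _ c \<open>a < b\<close>] b by simp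
    qed simp
  qed
  then have "card K \<le> card (insert a {b..<b + L})" by (rule card_mono[rotated]) simp
  also have "\<dots> \<le> L + 1" by (simp add: card_insert_if)
  finally show ?thesis .
qed

lemma card_le_card_image_mult:
  assumes "finite (f ` S)" and fibres: "\<And>y. card {x \<in> S. f x = y} \<le> B"
  shows "card S \<le> card (f ` S) * B"
proof -
  have "card S = card (\<Union>y\<in>f ` S. {x \<in> S. f x = y})"
    by (rule arg_cong[where f=card]) auto
  also have "\<dots> \<le> (\<Sum>y\<in>f ` S. card {x \<in> S. f x = y})"
    by (rule card_UN_le[OF assms(1)])
  also have "\<dots> \<le> card (f ` S) * B"
    using sum_bounded_above[of "f ` S", OF fibres] by simp
  finally show ?thesis .
qed

lemma cell_lo_nth: "cell_lo m u $ i = 2 ^ (m - fst u) * real (snd u $ i)"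
  by (simp add: cell_lo_def)

lemma cell_hi_nth: "cell_hi m u $ i = 2 ^ (m - fst u) * (real (snd u $ i) + 1)"
  by (simp add: cell_hi_def algebra_simps)

lemma cell_corner_nth:
  assumes "c \<in> cell_corners m u"
  obtains t where "t \<in> {snd u $ i, snd u $ i + 1}" "c $ i = 2 ^ (m - fst u) * real t"
proof -
  have "c $ i = cell_lo m u $ i \<or> c $ i = cell_hi m u $ i"
    using assms by (simp add: cell_corners_def)
  then show ?thesis
    using that[of "snd u $ i"] that[of "snd u $ i + 1"] by (auto simp: cell_lo_nth cell_hi_nth)
qed

lemma cell_corner_in_cell:
  assumes "c \<in> cell_corners m u"
  shows "c \<in> cell m u"
  unfolding cell_def mem_box_cart
proof
  fix i
  obtain t where "t \<in> {snd u $ i, snd u $ i + 1}" "c $ i = 2 ^ (m - fst u) * real t"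
    using cell_corner_nth[OF assms] .
  then show "cell_lo m u $ i \<le> c $ i \<and> c $ i \<le> cell_hi m u $ i"
    by (auto simp: cell_lo_nth cell_hi_nth)
qed

definition parent :: "onode \<Rightarrow> onode" where
  "parent u = (fst u - 1, \<chi> i. snd u $ i div 2)"

lemma
  assumes "1 \<le> fst u" "fst u \<le> m"
  shows cell_lo_parent_nth: "cell_lo m (parent u) $ i = 2 ^ (m - fst u) * real (2 * (snd u $ i div 2))"
    and cell_hi_parent_nth: "cell_hi m (parent u) $ i = 2 ^ (m - fst u) * real (2 * (snd u $ i div 2) + 2)"
proof -
  have "m - fst (parent u) = Suc (m - fst u)" using assms by (simp add: parent_def)
  then show "cell_lo m (parent u) $ i = 2 ^ (m - fst u) * real (2 * (snd u $ i div 2))"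
    and "cell_hi m (parent u) $ i = 2 ^ (m - fst u) * real (2 * (snd u $ i div 2) + 2)"
    by (simp_all add: cell_lo_nth cell_hi_nth parent_def algebra_simps)
qed

lemma proper_ancestor_parent:
  assumes u: "octree_node m u" and k: "1 \<le> fst u"
  shows "proper_ancestor m (parent u) u"
  unfolding proper_ancestor_def
proof (intro conjI)
  have km: "fst u \<le> m" using u by (simp add: octree_node_def)
  have "snd u $ i div 2 < 2 ^ (fst u - 1)" for i
  proof -
    have "snd u $ i < 2 * 2 ^ (fst u - 1)"
      using u k by (simp add: octree_node_def flip: power_Suc)
    then show ?thesis by linarith
  qed
  then show "octree_node m (parent u)"
    using km by (simp add: octree_node_def parent_def)
  show "fst (parent u) < fst u" using k by (simp add: parent_def)
  show "cell m u \<subseteq> cell m (parent u)"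
  proof
    fix x assume x: "x \<in> cell m u"
    have "cell_lo m (parent u) $ i \<le> x $ i \<and> x $ i \<le> cell_hi m (parent u) $ i" for i
    proof -
      let ?j = "snd u $ i"
      have "real (2 * (?j div 2)) \<le> real ?j" "real ?j + 1 \<le> real (2 * (?j div 2) + 2)"
        by linarith+
      then have "2 ^ (m - fst u) * real (2 * (?j div 2)) \<le> 2 ^ (m - fst u) * real ?j"
        "2 ^ (m - fst u) * (real ?j + 1) \<le> 2 ^ (m - fst u) * real (2 * (?j div 2) + 2)"
        by (intro mult_left_mono; simp)+
      moreover have "2 ^ (m - fst u) * real ?j \<le> x $ i" "x $ i \<le> 2 ^ (m - fst u) * (real ?j + 1)"
        using x by (auto simp: cell_def mem_box_cart cell_lo_nth cell_hi_nth)
      ultimately show ?thesis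
        unfolding cell_lo_parent_nth[OF k km] cell_hi_parent_nth[OF k km] by linarith
    qed
    then show "x \<in> cell m (parent u)" by (simp add: cell_def mem_box_cart)
  qed
qed

lemma cell_corner_odd_if_not_parent_corner:
  assumes k: "1 \<le> fst u" "fst u \<le> m"
    and c: "c \<in> cell_corners m u" "c \<notin> cell_corners m (parent u)"
  obtains i t where "odd t" "c $ i = 2 ^ (m - fst u) * real t"
proof -
  obtain i where ne: "c $ i \<noteq> cell_lo m (parent u) $ i" "c $ i \<noteq> cell_hi m (parent u) $ i"
    using c(2) by (auto simp: cell_corners_def)
  obtain t where t: "t \<in> {snd u $ i, snd u $ i + 1}" "c $ i = 2 ^ (m - fst u) * real t"
    using cell_corner_nth[OF c(1), where i=i] by blast
  have "odd t"
  proof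
    assume "even t"
    then have "t = 2 * (snd u $ i div 2) \<or> t = 2 * (snd u $ i div 2) + 2"
      using t(1) by auto
    then show False
      using ne t(2) by (auto simp: cell_lo_parent_nth[OF k] cell_hi_parent_nth[OF k])
  qed
  then show ?thesis using that t(2) by blast
qed

lemma cell_corner_even_multiple:
  assumes c: "c \<in> cell_corners m u" and k: "fst u < k" "k \<le> m"
  obtains p where "c $ i = 2 ^ (m - k) * real (2 * p)"
proof -
  obtain t where t: "c $ i = 2 ^ (m - fst u) * real t"
    using cell_corner_nth[OF c, where i=i] by blast
  have e: "m - fst u = (m - k) + Suc (k - fst u - 1)" using k by simp
  have "(2::real) ^ (m - fst u) = 2 ^ (m - k) * (2 * 2 ^ (k - fst u - 1))"
    by (simp only: e power_add power_Suc)
  then have "c $ i = 2 ^ (m - k) * real (2 * (2 ^ (k - fst u - 1) * t))"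
    using t by simp
  then show ?thesis using that by blast
qed

lemma P_has_corner: "R \<in> P m u \<Longrightarrow> \<exists>c\<in>cell_corners m u. c \<in> R"
  by (simp add: P_def)

lemma P_avoids_ancestor_corners:
  "R \<in> P m u \<Longrightarrow> proper_ancestor m w u \<Longrightarrow> c \<in> cell_corners m w \<Longrightarrow> c \<notin> R"
  unfolding P_def by blast

lemma P_short_side:
  assumes u: "octree_node m u" and R: "cbox lo hi \<in> P m u" and k: "1 \<le> fst u"
  shows "\<exists>i. hi $ i - lo $ i < 2 * 2 ^ (m - fst u)"
proof (rule ccontr)
  assume "\<not> ?thesis"
  moreover have km: "fst u \<le> m" using u by (simp add: octree_node_def)
  ultimately have wide: "\<And>i. cell_hi m (parent u) $ i - cell_lo m (parent u) $ i \<le> hi $ i - lo $ i"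
    by (simp add: cell_lo_parent_nth[OF k km] cell_hi_parent_nth[OF k km] algebra_simps not_less)
  have anc: "proper_ancestor m (parent u) u" using proper_ancestor_parent[OF u k] .
  obtain c where c: "c \<in> cell_corners m u" "c \<in> cbox lo hi" using P_has_corner[OF R] by blast
  have "c \<in> cbox (cell_lo m (parent u)) (cell_hi m (parent u))"
    using cell_corner_in_cell[OF c(1)] anc by (auto simp: proper_ancestor_def cell_def)
  then obtain x where "x \<in> cell_corners m (parent u)" "x \<in> cbox lo hi"
    using cbox_contains_corner[OF c(2) _ wide] by (auto simp: cell_corners_def)
  then show False using P_avoids_ancestor_corners[OF R anc] by blast
qed

lemma P_long_side:
  assumes u1: "octree_node m u1" "cbox lo hi \<in> P m u1"
    and u2: "octree_node m u2" "cbox lo hi \<in> P m u2" and lt: "fst u1 < fst u2"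
  shows "\<exists>i. 2 ^ (m - fst u2) \<le> hi $ i - lo $ i"
proof -
  have k2: "1 \<le> fst u2" "fst u2 \<le> m" using lt u2(1) by (auto simp: octree_node_def)
  obtain c1 where c1: "c1 \<in> cell_corners m u1" "c1 \<in> cbox lo hi" using P_has_corner[OF u1(2)] by blast
  obtain c2 where c2: "c2 \<in> cell_corners m u2" "c2 \<in> cbox lo hi" using P_has_corner[OF u2(2)] by blast
  have "c2 \<notin> cell_corners m (parent u2)"
    using P_avoids_ancestor_corners[OF u2(2) proper_ancestor_parent[OF u2(1) k2(1)]] c2(2) by blast
  then obtain i t where t: "odd t" "c2 $ i = 2 ^ (m - fst u2) * real t"
    using cell_corner_odd_if_not_parent_corner[OF k2 c2(1)] by blast
  obtain p where p: "c1 $ i = 2 ^ (m - fst u2) * real (2 * p)"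
    using cell_corner_even_multiple[OF c1(1) lt k2(2)] by blast
  have "2 ^ (m - fst u2) \<le> \<bar>c1 $ i - c2 $ i\<bar>"
    unfolding p t(2) by (rule odd_multiple_dist_even_multiple) (simp_all add: t(1))
  moreover have "lo $ i \<le> c1 $ i" "c1 $ i \<le> hi $ i" "lo $ i \<le> c2 $ i" "c2 $ i \<le> hi $ i"
    using c1(2) c2(2) by (auto simp: mem_box_cart)
  ultimately have "2 ^ (m - fst u2) \<le> hi $ i - lo $ i" by (simp add: abs_le_iff)
  then show ?thesis ..
qed

lemma P_levels_close:
  assumes \<alpha>: "\<alpha> \<ge> 1" "fat \<alpha> lo hi" and L: "2 * \<alpha> \<le> real L"
    and u1: "octree_node m u1" "cbox lo hi \<in> P m u1"
    and u2: "octree_node m u2" "cbox lo hi \<in> P m u2"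
    and u3: "octree_node m u3" "cbox lo hi \<in> P m u3"
    and lt: "fst u1 < fst u2" and le: "fst u2 \<le> fst u3"
  shows "fst u3 < fst u2 + L"
proof -
  obtain i where i: "2 ^ (m - fst u2) \<le> hi $ i - lo $ i" using P_long_side[OF u1 u2 lt] by blast
  obtain j where j: "hi $ j - lo $ j < 2 * 2 ^ (m - fst u3)" using P_short_side[OF u3] lt le by auto
  have "(2::real) ^ (m - fst u2) = 2 ^ (fst u3 - fst u2) * 2 ^ (m - fst u3)"
    using le u3(1) by (simp add: octree_node_def flip: power_add)
  moreover have "(2::real) ^ (m - fst u2) < 2 * \<alpha> * 2 ^ (m - fst u3)"
  proof -
    have "hi $ i - lo $ i \<le> \<alpha> * (hi $ j - lo $ j)" using \<alpha>(2) by (simp add: fat_def)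
    also have "\<dots> < \<alpha> * (2 * 2 ^ (m - fst u3))" using j \<alpha>(1) by simp
    finally show ?thesis using i by simp
  qed
  ultimately have "(2::real) ^ (fst u3 - fst u2) < 2 * \<alpha>" by simp
  also have "\<dots> \<le> real L" by (rule L)
  also have "\<dots> < 2 ^ L" by (rule of_nat_less_two_power)
  finally have "(2::real) ^ (fst u3 - fst u2) < 2 ^ L" .
  then show ?thesis using power_less_imp_less_exp[of "2::real"] by fastforce
qed

lemma card_P_levels:
  assumes "\<alpha> \<ge> 1" "fat \<alpha> lo hi" "2 * \<alpha> \<le> real L"
  shows "card (fst ` {u. octree_node m u \<and> cbox lo hi \<in> P m u}) \<le> L + 1"
    (is "card (fst ` ?S) \<le> _")
proof (rule card_le_if_clustered_above_Min)
  show "finite (fst ` ?S)"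
    by (rule finite_subset[of _ "{..m}"]) (auto simp: octree_node_def)
  fix a b c assume "a \<in> fst ` ?S" "b \<in> fst ` ?S" "c \<in> fst ` ?S" "a < b" "b \<le> c"
  then obtain u1 u2 u3 where "u1 \<in> ?S" "u2 \<in> ?S" "u3 \<in> ?S" "a = fst u1" "b = fst u2" "c = fst u3"
    by blast
  then show "c < b + L"
    using P_levels_close[OF assms, of m u1 u2 u3] \<open>a < b\<close> \<open>b \<le> c\<close> by simp
qed

lemma P_sides_bounded_by_level:
  assumes \<alpha>: "\<alpha> \<ge> 1" "fat \<alpha> lo hi"
    and u: "octree_node m u" "cbox lo hi \<in> P m u" "1 \<le> fst u"
  shows "hi $ i - lo $ i < 2 * \<alpha> * 2 ^ (m - fst u)"
proof -
  obtain j where j: "hi $ j - lo $ j < 2 * 2 ^ (m - fst u)" using P_short_side[OF u] by blast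
  have "hi $ i - lo $ i \<le> \<alpha> * (hi $ j - lo $ j)" using \<alpha>(2) by (simp add: fat_def)
  also have "\<dots> < \<alpha> * (2 * 2 ^ (m - fst u))" using j \<alpha>(1) by simp
  finally show ?thesis by simp
qed

lemma P_coord_in_window:
  assumes sides: "\<And>i. hi $ i - lo $ i < w * 2 ^ (m - k)" and N: "w + 1 \<le> real N"
    and u: "cbox lo hi \<in> P m u" "fst u = k"
  defines "x i \<equiv> lo $ i / 2 ^ (m - k) - 1"
  shows "snd u $ i \<in> {nat \<lceil>x i\<rceil>..<nat \<lceil>x i\<rceil> + N}"
proof (rule nat_in_window)
  define \<sigma> :: real where "\<sigma> = 2 ^ (m - k)"
  have "\<sigma> > 0" by (simp add: \<sigma>_def)
  obtain c where c: "c \<in> cell_corners m u" "c \<in> cbox lo hi" using P_has_corner[OF u(1)] by blast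
  obtain t where t: "t \<in> {snd u $ i, snd u $ i + 1}" "c $ i = \<sigma> * real t"
    using cell_corner_nth[OF c(1), where i=i] u(2) by (auto simp: \<sigma>_def)
  have "\<sigma> * real (snd u $ i) \<le> c $ i" "c $ i \<le> \<sigma> * (real (snd u $ i) + 1)"
    using t \<open>\<sigma> > 0\<close> by auto
  moreover have "lo $ i \<le> c $ i" "c $ i \<le> hi $ i" using c(2) by (auto simp: mem_box_cart)
  moreover have "hi $ i - lo $ i < w * \<sigma>" using sides by (simp add: \<sigma>_def)
  ultimately have "lo $ i \<le> \<sigma> * (real (snd u $ i) + 1)" "\<sigma> * real (snd u $ i) < lo $ i + w * \<sigma>"
    by linarith+
  then have "lo $ i \<le> (real (snd u $ i) + 1) * \<sigma>" "(real (snd u $ i) - w) * \<sigma> < lo $ i"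
    by (simp_all add: algebra_simps)
  then have "lo $ i / \<sigma> \<le> real (snd u $ i) + 1" "real (snd u $ i) - w < lo $ i / \<sigma>"
    by (simp_all only: pos_divide_le_eq[OF \<open>\<sigma> > 0\<close>] pos_less_divide_eq[OF \<open>\<sigma> > 0\<close>])
  then show "x i \<le> real (snd u $ i)" "real (snd u $ i) < x i + real N"
    using N by (simp_all add: x_def flip: \<sigma>_def)
qed

lemma card_P_level:
  assumes \<alpha>: "\<alpha> \<ge> 1" "fat \<alpha> lo hi" and N: "2 * \<alpha> + 1 \<le> real N"
  shows "card {u. octree_node m u \<and> cbox lo hi \<in> P m u \<and> fst u = k} \<le> N ^ 3"
    (is "card ?S \<le> _")
proof (cases "?S = {}")
  case False
  then obtain u0 where u0: "octree_node m u0" "cbox lo hi \<in> P m u0" "fst u0 = k" by blast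
  show ?thesis
  proof (cases "k = 0")
    case True
    have "?S \<subseteq> {(0, 0)}"
      using True by (auto simp: octree_node_def vec_eq_iff)
    then have "card ?S \<le> 1" using card_mono[of "{(0::nat, 0::nat^3)}" ?S] by simp
    also have "1 \<le> N ^ 3" using N \<alpha>(1) by (intro one_le_power) linarith
    finally show ?thesis .
  next
    case False
    define x where "x i = lo $ i / 2 ^ (m - k) - 1" for i
    define W where "W i = {nat \<lceil>x i\<rceil>..<nat \<lceil>x i\<rceil> + N}" for i
    have sides: "hi $ i - lo $ i < 2 * \<alpha> * 2 ^ (m - k)" for i
      using P_sides_bounded_by_level[OF \<alpha> u0(1,2)] u0(3) False by simp
    have "?S \<subseteq> Pair k ` {j. \<forall>i. j $ i \<in> W i}"
    proof
      fix u assume "u \<in> ?S"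
      then have "snd u $ i \<in> W i" "fst u = k" for i
        using P_coord_in_window[OF sides N] by (auto simp: W_def x_def)
      then show "u \<in> Pair k ` {j. \<forall>i. j $ i \<in> W i}"
        by (intro image_eqI[of _ _ "snd u"]) (auto simp: prod_eq_iff)
    qed
    moreover have "finite {j :: nat^3. \<forall>i. j $ i \<in> W i}"
      by (rule finite_vec_componentwise) (simp add: W_def)
    ultimately have "card ?S \<le> card {j :: nat^3. \<forall>i. j $ i \<in> W i}"
      by (meson card_image_le card_mono finite_imageI order_trans)
    also have "\<dots> = N ^ 3" unfolding card_vec_componentwise by (simp add: W_def)
    finally show ?thesis .
  qed
qed (metis card.empty le0)

theorem mainTheorem8:
  fixes \<alpha> :: real
  assumes "\<alpha> \<ge> 1"
  shows "\<exists>C::nat. \<forall>(m::nat) (lo::real^3) (hi::real^3).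
           (\<forall>i. lo $ i \<in> \<int> \<and> hi $ i \<in> \<int> \<and> 0 \<le> lo $ i \<and> lo $ i \<le> hi $ i \<and> hi $ i \<le> 2 ^ m)
           \<and> fat \<alpha> lo hi
           \<longrightarrow> card {u. octree_node m u \<and> cbox lo hi \<in> P m u} \<le> C"
proof (intro exI allI impI)
  define L where "L = nat \<lceil>2 * \<alpha>\<rceil>"
  have L: "2 * \<alpha> \<le> real L" unfolding L_def by (rule real_nat_ceiling_ge)
  fix m lo hi
  assume "(\<forall>i. lo $ i \<in> \<int> \<and> hi $ i \<in> \<int> \<and> 0 \<le> lo $ i \<and> lo $ i \<le> hi $ i \<and> hi $ i \<le> 2 ^ m)
    \<and> fat \<alpha> lo hi"
  then have fat: "fat \<alpha> lo hi" by blast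
  define S where "S = {u. octree_node m u \<and> cbox lo hi \<in> P m u}"
  have "card {u \<in> S. fst u = k} \<le> (L + 1) ^ 3" for k
    using card_P_level[OF assms fat, of "L + 1" m k] L by (simp add: S_def conj_assoc)
  then have "card S \<le> card (fst ` S) * (L + 1) ^ 3"
    by (intro card_le_card_image_mult) (auto simp: S_def octree_node_def intro: finite_subset[of _ "{..m}"])
  also have "\<dots> \<le> (L + 1) * (L + 1) ^ 3"
    using card_P_levels[OF assms fat L, of m] unfolding S_def by (rule mult_le_mono1)
  finally show "card {u. octree_node m u \<and> cbox lo hi \<in> P m u} \<le> (L + 1) * (L + 1) ^ 3"
    by (simp add: S_def)
qed

end
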